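(* Fix a state $s$, a utility $u:\mathcal S\times\Omega\times\mathcal A\to[0,1]$, a function $Q:\mathcal S\times\Omega\times\mathcal A\to[0,H]$, a prior $\mu^*\in\Delta(\Omega)$ that is $(p_0,D)$-regular at $s$, and $\epsilon>0$. If $\hat\mu\in\Delta(\Omega)$ satisfies $\|\hat\mu-\mu^*\|_1\le\epsilon$, then $$\mathrm{Gap}\big(s,\hat\mu,\mathbb B(\hat\mu,\epsilon);Q\big)\le\frac{2H\epsilon}{p_0D}.$$
   Context: $\mathcal A$ is a finite action set, $\mathcal S$ a state space and $\Omega$ an outcome space; $\Delta(\Omega)$ is the set of probability distributions on $\Omega$ (with densities/mass functions $\mu(\omega)$), and $\|\mu-\mu'\|_1=\int_\Omega|\mu(\omega)-\mu'(\omega)|\,\mathrm d\omega$. A signaling scheme $\pi$ assigns to each $(s,\omega)$ a distribution $\pi(\cdot\mid s,\omega)\in\Delta(\mathcal A)$. For a prior $\mu$ and utility $u$, $\mathrm{Pers}(\mu,u)$ is the set of $\pi$ with $\int_\Omega\mu(\omega)\pi(a\mid s,\omega)[u(s,\omega,a)-u(s,\omega,a')]\,\mathrm d\omega\ge0$ for all $a,a'\in\mathcal A$ and states $s$; for a set $\mathcal B\subseteq\Delta(\Omega)$, $\mathrm{Pers}(\mathcal B,u)=\bigcap_{\mu'\in\mathcal B}\mathrm{Pers}(\mu',u)$. $\langle Q,\mu\otimes\pi\rangle(s)=\mathbb E_{\omega\sim\mu,\,a\sim\pi(\cdot\mid s,\omega)}[Q(s,\omega,a)]$. The robustness gap is $\mathrm{Gap}(s,\mu,\mathcal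 B;Q)=\max_{\pi\in\mathrm{Pers}(\mu,u)}\langle Q,\mu\otimes\pi\rangle(s)-\max_{\pi\in\mathrm{Pers}(\mathcal B,u)}\langle Q,\mu\otimes\pi\rangle(s)$. $\mathbb B(\mu,\epsilon)=\{\mu'\in\Delta(\Omega):\|\mu-\mu'\|_1\le\epsilon\}$. A prior $\mu$ is $(p_0,D)$-regular at $s$ if $\Pr_{\omega\sim\mu}[\omega\in\mathcal W_{s,a}(D)]\ge p_0$ for all $a\in\mathcal A$, where $\mathcal W_{s,a}(D)=\{\omega:u(s,\omega,a)-u(s,\omega,a')\ge D\ \forall a'\in\mathcal A\setminus\{a\}\}$. *)

theory Defs
  imports "HOL-Analysis.Analysis"
begin

text \<open>The outcome space \<Omega> carries a reference measure M (the measure "d\<omega>");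
  priors are probability densities w.r.t. M.\<close>

definition prob_dens :: "'w measure \<Rightarrow> ('w \<Rightarrow> real) set" where
  "prob_dens M = {\<mu>. \<mu> \<in> borel_measurable M \<and> (\<forall>\<omega>\<in>space M. 0 \<le> \<mu> \<omega>)
                     \<and> integrable M \<mu> \<and> (\<integral>\<omega>. \<mu> \<omega> \<partial>M) = 1}"

definition l1_dist :: "'w measure \<Rightarrow> ('w \<Rightarrow> real) \<Rightarrow> ('w \<Rightarrow> real) \<Rightarrow> real" where
  "l1_dist M \<mu> \<mu>' = (\<integral>\<omega>. \<bar>\<mu> \<omega> - \<mu>' \<omega>\<bar> \<partial>M)"

text \<open>Signaling schemes: \<pi> s \<omega> a = \<pi>(a | s, \<omega>), a distribution over the finite action type.\<close>
definition schemes :: "'w measure \<Rightarrow> ('s \<Rightarrow> 'w \<Rightarrow> 'a::finite \<Rightarrow> real) set" where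
  "schemes M = {\<pi>. (\<forall>s a. (\<lambda>\<omega>. \<pi> s \<omega> a) \<in> borel_measurable M)
                  \<and> (\<forall>s \<omega> a. 0 \<le> \<pi> s \<omega> a) \<and> (\<forall>s \<omega>. (\<Sum>a\<in>UNIV. \<pi> s \<omega> a) = 1)}"

definition Pers :: "'w measure \<Rightarrow> ('w \<Rightarrow> real) \<Rightarrow> ('s \<Rightarrow> 'w \<Rightarrow> 'a::finite \<Rightarrow> real)
                      \<Rightarrow> ('s \<Rightarrow> 'w \<Rightarrow> 'a \<Rightarrow> real) set" where
  "Pers M \<mu> u = {\<pi> \<in> schemes M. \<forall>s a a'.
      (\<integral>\<omega>. \<mu> \<omega> * \<pi> s \<omega> a * (u s \<omega> a - u s \<omega> a') \<partial>M) \<ge> 0}"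

definition PersSet :: "'w measure \<Rightarrow> ('w \<Rightarrow> real) set \<Rightarrow> ('s \<Rightarrow> 'w \<Rightarrow> 'a::finite \<Rightarrow> real)
                      \<Rightarrow> ('s \<Rightarrow> 'w \<Rightarrow> 'a \<Rightarrow> real) set" where
  "PersSet M B u = {\<pi> \<in> schemes M. \<forall>\<mu>'\<in>B. \<pi> \<in> Pers M \<mu>' u}"

definition payoff :: "'w measure \<Rightarrow> ('s \<Rightarrow> 'w \<Rightarrow> 'a::finite \<Rightarrow> real) \<Rightarrow> ('w \<Rightarrow> real)
                      \<Rightarrow> ('s \<Rightarrow> 'w \<Rightarrow> 'a \<Rightarrow> real) \<Rightarrow> 's \<Rightarrow> real" where
  "payoff M Q \<mu> \<pi> s = (\<integral>\<omega>. \<mu> \<omega> * (\<Sum>a\<in>UNIV. \<pi> s \<omega> a * Q s \<omega> a) \<partial>M)"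

definition Gap :: "'w measure \<Rightarrow> ('s \<Rightarrow> 'w \<Rightarrow> 'a::finite \<Rightarrow> real) \<Rightarrow> ('s \<Rightarrow> 'w \<Rightarrow> 'a \<Rightarrow> real)
                   \<Rightarrow> 's \<Rightarrow> ('w \<Rightarrow> real) \<Rightarrow> ('w \<Rightarrow> real) set \<Rightarrow> real" where
  "Gap M u Q s \<mu> B =
     (SUP \<pi>\<in>Pers M \<mu> u. payoff M Q \<mu> \<pi> s) - (SUP \<pi>\<in>PersSet M B u. payoff M Q \<mu> \<pi> s)"

definition ball_l1 :: "'w measure \<Rightarrow> ('w \<Rightarrow> real) \<Rightarrow> real \<Rightarrow> ('w \<Rightarrow> real) set" where
  "ball_l1 M \<mu> \<epsilon> = {\<mu>' \<in> prob_dens M. l1_dist M \<mu> \<mu>' \<le> \<epsilon>}"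

definition Wset :: "'w measure \<Rightarrow> ('s \<Rightarrow> 'w \<Rightarrow> 'a \<Rightarrow> real) \<Rightarrow> 's \<Rightarrow> 'a \<Rightarrow> real \<Rightarrow> 'w set" where
  "Wset M u s a D = {\<omega> \<in> space M. \<forall>a'. a' \<noteq> a \<longrightarrow> u s \<omega> a - u s \<omega> a' \<ge> D}"

definition regular :: "'w measure \<Rightarrow> ('s \<Rightarrow> 'w \<Rightarrow> 'a \<Rightarrow> real) \<Rightarrow> 's \<Rightarrow> ('w \<Rightarrow> real)
                       \<Rightarrow> real \<Rightarrow> real \<Rightarrow> bool" where
  "regular M u s \<mu> p0 D = (\<forall>a. (\<integral>\<omega>. indicator (Wset M u s a D) \<omega> * \<mu> \<omega> \<partial>M) \<ge> p0)"

end

theory Submission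
  imports Defs
begin

text \<open>Mix a given \<open>\<mu>hat\<close>-persuasive scheme \<open>\<pi>\<close>, with weight \<open>\<delta> = min 1 (2\<epsilon>/(p0 D))\<close>, with
  the scheme that recommends a utility-maximizing action. The payoff under \<open>\<mu>hat\<close> drops by at
  most \<open>\<delta>H\<close>. Against a prior \<open>\<mu>'\<close> in the \<open>\<epsilon>\<close>-ball around \<open>\<mu>hat\<close>, the obedience constraints
  of \<open>\<pi>\<close> are violated by at most \<open>\<epsilon>\<close>, while those of the best response hold with slack
  \<open>D (p0 - 2\<epsilon>)\<close>: \<open>\<mu>'\<close> is \<open>2\<epsilon>\<close>-close to the regular prior \<open>\<mu>star\<close>, so it still puts mass
  \<open>p0 - 2\<epsilon>\<close> on each region where one action beats all others by \<open>D\<close>. With this \<open>\<delta>\<close> the mixture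
  is persuasive for the whole ball.\<close>

lemma integrable_mult_bounded:
  fixes \<mu> f :: "'w \<Rightarrow> real"
  assumes "integrable M \<mu>" "f \<in> borel_measurable M" "\<And>\<omega>. \<omega> \<in> space M \<Longrightarrow> \<bar>f \<omega>\<bar> \<le> C"
  shows "integrable M (\<lambda>\<omega>. \<mu> \<omega> * f \<omega>)"
proof (rule Bochner_Integration.integrable_bound[where f="\<lambda>\<omega>. C * \<mu> \<omega>"])
  show "integrable M (\<lambda>\<omega>. C * \<mu> \<omega>)" using assms(1) by simp
  show "(\<lambda>\<omega>. \<mu> \<omega> * f \<omega>) \<in> borel_measurable M"
    using assms(1,2) by (simp add: borel_measurable_integrable)
  show "AE \<omega> in M. norm (\<mu> \<omega> * f \<omega>) \<le> norm (C * \<mu> \<omega>)"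
  proof (rule AE_I2)
    fix \<omega> assume "\<omega> \<in> space M"
    then have "\<bar>\<mu> \<omega>\<bar> * \<bar>f \<omega>\<bar> \<le> \<bar>\<mu> \<omega>\<bar> * \<bar>C\<bar>"
      using assms(3) by (intro mult_left_mono) (auto intro: order_trans[OF _ abs_ge_self])
    then show "norm (\<mu> \<omega> * f \<omega>) \<le> norm (C * \<mu> \<omega>)" by (simp add: abs_mult mult.commute)
  qed
qed

lemma l1_dist_commute: "l1_dist M \<mu> \<nu> = l1_dist M \<nu> \<mu>"
  by (simp add: l1_dist_def abs_minus_commute)

lemma l1_dist_triangle:
  assumes "integrable M \<mu>" "integrable M \<nu>" "integrable M \<rho>"
  shows "l1_dist M \<mu> \<nu> \<le> l1_dist M \<mu> \<rho> + l1_dist M \<rho> \<nu>"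
proof -
  have "l1_dist M \<mu> \<nu> \<le> (\<integral>\<omega>. \<bar>\<mu> \<omega> - \<rho> \<omega>\<bar> + \<bar>\<rho> \<omega> - \<nu> \<omega>\<bar> \<partial>M)"
    unfolding l1_dist_def by (rule integral_mono) (use assms in auto)
  also have "\<dots> = l1_dist M \<mu> \<rho> + l1_dist M \<rho> \<nu>"
    unfolding l1_dist_def by (rule Bochner_Integration.integral_add) (use assms in auto)
  finally show ?thesis .
qed

lemma integral_mult_ge_sub_l1_dist:
  fixes \<mu> \<nu> f :: "'w \<Rightarrow> real"
  assumes \<mu>: "integrable M \<mu>" and \<nu>: "integrable M \<nu>" and f: "f \<in> borel_measurable M"
    and f_le: "\<And>\<omega>. \<omega> \<in> space M \<Longrightarrow> \<bar>f \<omega>\<bar> \<le> 1"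
  shows "(\<integral>\<omega>. \<mu> \<omega> * f \<omega> \<partial>M) - l1_dist M \<mu> \<nu> \<le> (\<integral>\<omega>. \<nu> \<omega> * f \<omega> \<partial>M)"
proof -
  have \<mu>f: "integrable M (\<lambda>\<omega>. \<mu> \<omega> * f \<omega>)" and \<nu>f: "integrable M (\<lambda>\<omega>. \<nu> \<omega> * f \<omega>)"
    using integrable_mult_bounded[OF _ f f_le] \<mu> \<nu> by auto
  have diff: "integrable M (\<lambda>\<omega>. \<bar>\<mu> \<omega> - \<nu> \<omega>\<bar>)" using \<mu> \<nu> by simp
  have pointwise: "\<mu> \<omega> * f \<omega> - \<bar>\<mu> \<omega> - \<nu> \<omega>\<bar> \<le> \<nu> \<omega> * f \<omega>" if "\<omega> \<in> space M" for \<omega>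
  proof -
    have "\<bar>(\<mu> \<omega> - \<nu> \<omega>) * f \<omega>\<bar> \<le> \<bar>\<mu> \<omega> - \<nu> \<omega>\<bar>"
      using f_le[OF that] by (simp add: abs_mult mult_left_le)
    then show ?thesis by (simp add: left_diff_distrib abs_le_iff)
  qed
  have "(\<integral>\<omega>. \<mu> \<omega> * f \<omega> \<partial>M) - l1_dist M \<mu> \<nu> = (\<integral>\<omega>. \<mu> \<omega> * f \<omega> - \<bar>\<mu> \<omega> - \<nu> \<omega>\<bar> \<partial>M)"
    unfolding l1_dist_def using \<mu>f diff by simp
  also have "\<dots> \<le> (\<integral>\<omega>. \<nu> \<omega> * f \<omega> \<partial>M)"
    by (rule integral_mono) (use \<mu>f diff \<nu>f pointwise in auto)
  finally show ?thesis .
qed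

lemma scheme_le_1: "\<pi> \<in> schemes M \<Longrightarrow> \<pi> s \<omega> a \<le> 1"
  using member_le_sum[of a UNIV "\<pi> s \<omega>"] by (auto simp: schemes_def)

lemma obedience_integrand_bounded:
  assumes "\<sigma> \<in> schemes M" and u: "\<And>s a. (\<lambda>\<omega>. u s \<omega> a) \<in> borel_measurable M"
    and "\<And>s \<omega> a. 0 \<le> u s \<omega> a \<and> u s \<omega> a \<le> 1"
  shows "(\<lambda>\<omega>. \<sigma> s \<omega> a * (u s \<omega> a - u s \<omega> a')) \<in> borel_measurable M"
    and "\<bar>\<sigma> s \<omega> a * (u s \<omega> a - u s \<omega> a')\<bar> \<le> 1"
proof -
  note [measurable] = u
  have [measurable]: "(\<lambda>\<omega>. \<sigma> s \<omega> a) \<in> borel_measurable M"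
    using assms(1) by (auto simp: schemes_def)
  show "(\<lambda>\<omega>. \<sigma> s \<omega> a * (u s \<omega> a - u s \<omega> a')) \<in> borel_measurable M" by measurable
  show "\<bar>\<sigma> s \<omega> a * (u s \<omega> a - u s \<omega> a')\<bar> \<le> 1"
    using assms(1) scheme_le_1[OF assms(1)] assms(3)[of s \<omega> a] assms(3)[of s \<omega> a']
    by (auto simp: schemes_def abs_mult intro!: mult_le_one)
qed

lemma scheme_expectation_bounds:
  assumes "\<pi> \<in> schemes M" "\<And>\<omega> a. 0 \<le> Q s \<omega> a \<and> Q s \<omega> a \<le> H"
  shows "0 \<le> (\<Sum>a\<in>UNIV. \<pi> s \<omega> a * Q s \<omega> a) \<and> (\<Sum>a\<in>UNIV. \<pi> s \<omega> a * Q s \<omega> a) \<le> H"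
proof -
  have nonneg: "\<And>a. 0 \<le> \<pi> s \<omega> a" and sum1: "(\<Sum>a\<in>UNIV. \<pi> s \<omega> a) = 1"
    using assms(1) by (auto simp: schemes_def)
  have "(\<Sum>a\<in>UNIV. \<pi> s \<omega> a * Q s \<omega> a) \<le> (\<Sum>a\<in>UNIV. \<pi> s \<omega> a * H)"
    using nonneg assms(2) by (intro sum_mono mult_left_mono) auto
  also have "\<dots> = H" using sum1 by (simp add: sum_distrib_right[symmetric])
  finally show ?thesis using nonneg assms(2) by (auto intro: sum_nonneg)
qed

lemma payoff_integrable:
  assumes "integrable M \<mu>" "\<pi> \<in> schemes M" "\<And>a. (\<lambda>\<omega>. Q s \<omega> a) \<in> borel_measurable M"
    and "\<And>\<omega> a. 0 \<le> Q s \<omega> a \<and> Q s \<omega> a \<le> H"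
  shows "integrable M (\<lambda>\<omega>. \<mu> \<omega> * (\<Sum>a\<in>UNIV. \<pi> s \<omega> a * Q s \<omega> a))"
proof (rule integrable_mult_bounded[OF assms(1)])
  have [measurable]: "\<And>a. (\<lambda>\<omega>. \<pi> s \<omega> a) \<in> borel_measurable M"
    using assms(2) by (auto simp: schemes_def)
  note [measurable] = assms(3)
  show "(\<lambda>\<omega>. \<Sum>a\<in>UNIV. \<pi> s \<omega> a * Q s \<omega> a) \<in> borel_measurable M" by measurable
  show "\<bar>\<Sum>a\<in>UNIV. \<pi> s \<omega> a * Q s \<omega> a\<bar> \<le> H" for \<omega>
    using scheme_expectation_bounds[where Q=Q and s=s and H=H, OF assms(2,4)] by auto
qed

lemma payoff_bounds:
  assumes "\<mu> \<in> prob_dens M" "\<pi> \<in> schemes M" "\<And>a. (\<lambda>\<omega>. Q s \<omega> a) \<in> borel_measurable M"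
    and Q: "\<And>\<omega> a. 0 \<le> Q s \<omega> a \<and> Q s \<omega> a \<le> H"
  shows "0 \<le> payoff M Q \<mu> \<pi> s \<and> payoff M Q \<mu> \<pi> s \<le> H"
proof
  have \<mu>: "integrable M \<mu>" "\<And>\<omega>. \<omega> \<in> space M \<Longrightarrow> 0 \<le> \<mu> \<omega>" "(\<integral>\<omega>. \<mu> \<omega> \<partial>M) = 1"
    using assms(1) by (auto simp: prob_dens_def)
  note bounds = scheme_expectation_bounds[where Q=Q and s=s and H=H, OF assms(2) Q]
  show "0 \<le> payoff M Q \<mu> \<pi> s"
    unfolding payoff_def using \<mu>(2) bounds by (intro integral_nonneg_AE AE_I2) simp
  have "payoff M Q \<mu> \<pi> s \<le> (\<integral>\<omega>. \<mu> \<omega> * H \<partial>M)"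
    unfolding payoff_def using payoff_integrable[where Q=Q and s=s and H=H, OF \<mu>(1) assms(2-4)] \<mu>(1,2) bounds
    by (intro integral_mono) (auto intro: mult_left_mono)
  then show "payoff M Q \<mu> \<pi> s \<le> H" using \<mu>(3) by simp
qed

subsection \<open>The best-response scheme\<close>

definition best_response :: "('s \<Rightarrow> 'w \<Rightarrow> 'a::finite \<Rightarrow> real) \<Rightarrow> 's \<Rightarrow> 'w \<Rightarrow> 'a \<Rightarrow> real" where
  "best_response u s \<omega> a =
     of_bool (\<forall>b. u s \<omega> b \<le> u s \<omega> a) / (\<Sum>a'\<in>UNIV. of_bool (\<forall>b. u s \<omega> b \<le> u s \<omega> a'))"

lemma best_response_denominator_ge_1:
  fixes u :: "'s \<Rightarrow> 'w \<Rightarrow> 'a::finite \<Rightarrow> real"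
  shows "1 \<le> (\<Sum>a'\<in>(UNIV::'a::finite set). of_bool (\<forall>b. u s \<omega> b \<le> u s \<omega> a') :: real)"
proof -
  have "Max (range (u s \<omega>)) \<in> range (u s \<omega>)" by (rule Max_in) auto
  then obtain a where a: "u s \<omega> a = Max (range (u s \<omega>))" by (metis rangeE)
  then have "1 \<le> (of_bool (\<forall>b. u s \<omega> b \<le> u s \<omega> a) :: real)" by simp
  also have "\<dots> \<le> (\<Sum>a'\<in>UNIV. of_bool (\<forall>b. u s \<omega> b \<le> u s \<omega> a'))"
    by (rule member_le_sum) auto
  finally show ?thesis .
qed

lemma best_response_nonneg: "0 \<le> best_response u s \<omega> a"
  unfolding best_response_def by (intro divide_nonneg_nonneg sum_nonneg) auto

lemma best_response_sum: "(\<Sum>a\<in>UNIV. best_response u s \<omega> a) = 1"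
  unfolding best_response_def sum_divide_distrib[symmetric]
  by (rule divide_self) (use best_response_denominator_ge_1[of u s \<omega>] in linarith)

lemma best_response_obedient: "0 \<le> best_response u s \<omega> a * (u s \<omega> a - u s \<omega> a')"
  by (cases "\<forall>b. u s \<omega> b \<le> u s \<omega> a") (auto simp: best_response_def)

lemma best_response_eq_1_on_Wset:
  assumes "D > 0" "\<omega> \<in> Wset M u s a D"
  shows "best_response u s \<omega> a = 1"
proof -
  have "of_bool (\<forall>b. u s \<omega> b \<le> u s \<omega> a') = (if a' = a then 1 else 0 :: real)" for a'
  proof (cases "a' = a")
    case False
    then have "u s \<omega> a' < u s \<omega> a" using assms by (force simp: Wset_def)
    then show ?thesis using False by (auto simp: not_le)
  qed (use assms in \<open>force simp: Wset_def\<close>)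
  then show ?thesis by (simp add: best_response_def)
qed

lemma best_response_measurable:
  assumes u: "\<And>s a. (\<lambda>\<omega>. u s \<omega> a) \<in> borel_measurable M"
  shows "(\<lambda>\<omega>. best_response u s \<omega> a) \<in> borel_measurable M"
proof -
  note [measurable] = u
  have [measurable]: "Measurable.pred M (\<lambda>\<omega>. \<forall>b\<in>UNIV. u s \<omega> b \<le> u s \<omega> a')" for a'
    by (intro pred_intros_finite) measurable
  show ?thesis unfolding best_response_def by measurable
qed

lemma best_response_schemes:
  assumes "\<And>s a. (\<lambda>\<omega>. u s \<omega> a) \<in> borel_measurable M"
  shows "best_response u \<in> schemes M"
  using best_response_measurable[OF assms] best_response_nonneg best_response_sum
  by (auto simp: schemes_def)

lemma best_response_Pers:
  assumes "\<And>s a. (\<lambda>\<omega>. u s \<omega> a) \<in> borel_measurable M" "\<And>\<omega>. \<omega> \<in> space M \<Longrightarrow> 0 \<le> \<mu> \<omega>"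
  shows "best_response u \<in> Pers M \<mu> u"
  unfolding Pers_def
proof (intro CollectI conjI allI best_response_schemes[OF assms(1)])
  fix s a a'
  show "0 \<le> (\<integral>\<omega>. \<mu> \<omega> * best_response u s \<omega> a * (u s \<omega> a - u s \<omega> a') \<partial>M)"
    using assms(2) best_response_obedient[of u s _ a a']
    by (intro integral_nonneg_AE AE_I2) (simp add: mult.assoc)
qed

lemma Wset_sets:
  fixes u :: "'s \<Rightarrow> 'w \<Rightarrow> 'a::finite \<Rightarrow> real"
  assumes u: "\<And>s a. (\<lambda>\<omega>. u s \<omega> a) \<in> borel_measurable M"
  shows "Wset M u s a D \<in> sets M"
proof -
  note [measurable] = u
  have "Measurable.pred M (\<lambda>\<omega>. \<forall>b\<in>UNIV. b \<noteq> a \<longrightarrow> D \<le> u s \<omega> a - u s \<omega> b)"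
    by (intro pred_intros_finite) measurable
  then show ?thesis unfolding Wset_def by (simp add: pred_def)
qed

lemma best_response_obedience_ge:
  assumes u: "\<And>s a. (\<lambda>\<omega>. u s \<omega> a) \<in> borel_measurable M"
    and u_range: "\<And>s \<omega> a. 0 \<le> u s \<omega> a \<and> u s \<omega> a \<le> 1"
    and \<mu>: "integrable M \<mu>" "\<And>\<omega>. \<omega> \<in> space M \<Longrightarrow> 0 \<le> \<mu> \<omega>"
    and D: "D > 0" and a: "a \<noteq> a'"
  shows "D * (\<integral>\<omega>. indicator (Wset M u s a D) \<omega> * \<mu> \<omega> \<partial>M)
           \<le> (\<integral>\<omega>. \<mu> \<omega> * (best_response u s \<omega> a * (u s \<omega> a - u s \<omega> a')) \<partial>M)"
proof -
  let ?W = "Wset M u s a D"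
  have [measurable]: "?W \<in> sets M" "\<And>s a. (\<lambda>\<omega>. u s \<omega> a) \<in> borel_measurable M"
    using Wset_sets[OF u] u by auto
  have "integrable M (\<lambda>\<omega>. \<mu> \<omega> * (best_response u s \<omega> a * (u s \<omega> a - u s \<omega> a')))"
    using obedience_integrand_bounded[OF best_response_schemes[OF u] u u_range]
    by (intro integrable_mult_bounded[OF \<mu>(1)])
  moreover have "D * (indicator ?W \<omega> * \<mu> \<omega>)
                   \<le> \<mu> \<omega> * (best_response u s \<omega> a * (u s \<omega> a - u s \<omega> a'))"
    if \<omega>: "\<omega> \<in> space M" for \<omega>
  proof (cases "\<omega> \<in> ?W")
    case True
    then have "D \<le> u s \<omega> a - u s \<omega> a'" using a by (auto simp: Wset_def)
    then show ?thesis
      using True best_response_eq_1_on_Wset[OF D True] \<mu>(2)[OF \<omega>]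
      by (simp add: mult.commute[of D] mult_left_mono)
  next
    case False
    then show ?thesis using \<mu>(2)[OF \<omega>] best_response_obedient[of u s \<omega> a a'] by simp
  qed
  moreover have "integrable M (\<lambda>\<omega>. indicator ?W \<omega> * \<mu> \<omega>)"
    using integrable_mult_indicator[OF _ \<mu>(1)] by simp
  ultimately show ?thesis
    by (subst integral_mult_right_zero[symmetric]) (intro integral_mono; simp)
qed

lemma regular_Wset_mass_ge:
  fixes u :: "'s \<Rightarrow> 'w \<Rightarrow> 'a::finite \<Rightarrow> real"
  assumes u: "\<And>s a. (\<lambda>\<omega>. u s \<omega> a) \<in> borel_measurable M"
    and \<mu>: "integrable M \<mu>" and \<nu>: "integrable M \<nu>" and reg: "regular M u s \<mu> p0 D"
  shows "p0 - l1_dist M \<mu> \<nu> \<le> (\<integral>\<omega>. indicator (Wset M u s a D) \<omega> * \<nu> \<omega> \<partial>M)"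
proof -
  have "p0 \<le> (\<integral>\<omega>. \<mu> \<omega> * indicator (Wset M u s a D) \<omega> \<partial>M)"
    using reg by (simp add: regular_def mult.commute)
  also have "\<dots> - l1_dist M \<mu> \<nu> \<le> (\<integral>\<omega>. \<nu> \<omega> * indicator (Wset M u s a D) \<omega> \<partial>M)"
    using Wset_sets[where u=u, OF u] by (intro integral_mult_ge_sub_l1_dist[OF \<mu> \<nu>]) auto
  finally show ?thesis by (simp add: mult.commute)
qed

lemma best_response_obedience_ge_regular:
  fixes u :: "'s \<Rightarrow> 'w \<Rightarrow> 'a::finite \<Rightarrow> real"
  assumes u: "\<And>s a. (\<lambda>\<omega>. u s \<omega> a) \<in> borel_measurable M"
    and u_range: "\<And>s \<omega> a. 0 \<le> u s \<omega> a \<and> u s \<omega> a \<le> 1"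
    and \<mu>: "integrable M \<mu>" and reg: "regular M u s \<mu> p0 D"
    and \<nu>: "integrable M \<nu>" "\<And>\<omega>. \<omega> \<in> space M \<Longrightarrow> 0 \<le> \<nu> \<omega>"
    and D: "D > 0" and a: "a \<noteq> a'"
  shows "D * (p0 - l1_dist M \<mu> \<nu>) \<le> (\<integral>\<omega>. \<nu> \<omega> * (best_response u s \<omega> a * (u s \<omega> a - u s \<omega> a')) \<partial>M)"
proof -
  have "D * (p0 - l1_dist M \<mu> \<nu>) \<le> D * (\<integral>\<omega>. indicator (Wset M u s a D) \<omega> * \<nu> \<omega> \<partial>M)"
    using regular_Wset_mass_ge[OF u \<mu> \<nu>(1) reg] D by (intro mult_left_mono) auto
  also have "\<dots> \<le> (\<integral>\<omega>. \<nu> \<omega> * (best_response u s \<omega> a * (u s \<omega> a - u s \<omega> a')) \<partial>M)"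
    by (rule best_response_obedience_ge[where u=u, OF u u_range \<nu> D a])
  finally show ?thesis .
qed

lemma regular_margin_le_1:
  fixes u :: "'s \<Rightarrow> 'w \<Rightarrow> 'a \<Rightarrow> real" and a a' :: 'a
  assumes u_range: "\<And>s \<omega> a. 0 \<le> u s \<omega> a \<and> u s \<omega> a \<le> 1"
    and "p0 > 0" and reg: "regular M u s \<mu> p0 D" and a: "a \<noteq> a'"
  shows "D \<le> 1"
proof (rule ccontr)
  assume "\<not> D \<le> 1"
  have "\<not> D \<le> u s \<omega> a - u s \<omega> a'" for \<omega>
    using \<open>\<not> D \<le> 1\<close> u_range[of s \<omega> a] u_range[of s \<omega> a'] by linarith
  then have "Wset M u s a D = {}"
    using a by (auto simp: Wset_def intro!: exI[of _ a'])
  then show False using reg \<open>p0 > 0\<close> by (auto simp: regular_def dest: spec[of _ a])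
qed

subsection \<open>Mixing schemes at a state\<close>

text \<open>Away from \<open>s\<close> the mixture follows \<open>\<rho>\<close>, so it inherits the persuasiveness of \<open>\<rho>\<close>
  at all other states.\<close>

definition mix_at :: "'s \<Rightarrow> real \<Rightarrow> ('s \<Rightarrow> 'w \<Rightarrow> 'a \<Rightarrow> real) \<Rightarrow> ('s \<Rightarrow> 'w \<Rightarrow> 'a \<Rightarrow> real)
                      \<Rightarrow> 's \<Rightarrow> 'w \<Rightarrow> 'a \<Rightarrow> real" where
  "mix_at s \<delta> \<pi> \<rho> = (\<lambda>s' \<omega> a. if s' = s then (1 - \<delta>) * \<pi> s \<omega> a + \<delta> * \<rho> s \<omega> a else \<rho> s' \<omega> a)"

lemma mix_at_schemes:
  assumes "0 \<le> \<delta>" "\<delta> \<le> 1" "\<pi> \<in> schemes M" "\<rho> \<in> schemes M"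
  shows "mix_at s \<delta> \<pi> \<rho> \<in> schemes M"
  unfolding schemes_def
proof (intro CollectI conjI allI)
  have [measurable]: "\<And>s a. (\<lambda>\<omega>. \<pi> s \<omega> a) \<in> borel_measurable M" "\<And>s a. (\<lambda>\<omega>. \<rho> s \<omega> a) \<in> borel_measurable M"
    and sums: "\<And>s \<omega>. (\<Sum>a\<in>UNIV. \<pi> s \<omega> a) = 1" "\<And>s \<omega>. (\<Sum>a\<in>UNIV. \<rho> s \<omega> a) = 1"
    using assms(3,4) by (auto simp: schemes_def)
  fix s' \<omega> a
  show "(\<lambda>\<omega>. mix_at s \<delta> \<pi> \<rho> s' \<omega> a) \<in> borel_measurable M"
    by (cases "s' = s") (simp_all add: mix_at_def)
  show "0 \<le> mix_at s \<delta> \<pi> \<rho> s' \<omega> a"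
    using assms by (auto simp: mix_at_def schemes_def)
  show "(\<Sum>a\<in>UNIV. mix_at s \<delta> \<pi> \<rho> s' \<omega> a) = 1"
    by (cases "s' = s") (simp_all add: mix_at_def sum.distrib sum_distrib_left[symmetric] sums)
qed

lemma payoff_mix_at:
  assumes "integrable M \<mu>" "\<pi> \<in> schemes M" "\<rho> \<in> schemes M"
    and "\<And>a. (\<lambda>\<omega>. Q s \<omega> a) \<in> borel_measurable M" "\<And>\<omega> a. 0 \<le> Q s \<omega> a \<and> Q s \<omega> a \<le> H"
  shows "payoff M Q \<mu> (mix_at s \<delta> \<pi> \<rho>) s = (1 - \<delta>) * payoff M Q \<mu> \<pi> s + \<delta> * payoff M Q \<mu> \<rho> s"
proof -
  have mix_sum: "(\<Sum>a\<in>UNIV. mix_at s \<delta> \<pi> \<rho> s \<omega> a * Q s \<omega> a)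
      = (1 - \<delta>) * (\<Sum>a\<in>UNIV. \<pi> s \<omega> a * Q s \<omega> a) + \<delta> * (\<Sum>a\<in>UNIV. \<rho> s \<omega> a * Q s \<omega> a)" for \<omega>
    by (simp add: mix_at_def distrib_right sum.distrib sum_distrib_left mult.assoc)
  then have "\<mu> \<omega> * (\<Sum>a\<in>UNIV. mix_at s \<delta> \<pi> \<rho> s \<omega> a * Q s \<omega> a)
      = (1 - \<delta>) * (\<mu> \<omega> * (\<Sum>a\<in>UNIV. \<pi> s \<omega> a * Q s \<omega> a))
        + \<delta> * (\<mu> \<omega> * (\<Sum>a\<in>UNIV. \<rho> s \<omega> a * Q s \<omega> a))" for \<omega>
    unfolding mix_sum by (simp add: algebra_simps)
  then show ?thesis
    unfolding payoff_def
    using payoff_integrable[where Q=Q and s=s and H=H, OF assms(1,2,4,5)]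
      payoff_integrable[where Q=Q and s=s and H=H, OF assms(1,3,4,5)] by simp
qed

lemma payoff_mix_at_ge:
  assumes \<mu>: "\<mu> \<in> prob_dens M" and "0 \<le> \<delta>" "\<delta> \<le> 1" "\<pi> \<in> schemes M" "\<rho> \<in> schemes M"
    and Q: "\<And>a. (\<lambda>\<omega>. Q s \<omega> a) \<in> borel_measurable M" "\<And>\<omega> a. 0 \<le> Q s \<omega> a \<and> Q s \<omega> a \<le> H"
  shows "payoff M Q \<mu> \<pi> s - \<delta> * H \<le> payoff M Q \<mu> (mix_at s \<delta> \<pi> \<rho>) s"
proof -
  have "\<delta> * payoff M Q \<mu> \<pi> s \<le> \<delta> * H" "0 \<le> \<delta> * payoff M Q \<mu> \<rho> s"
    using payoff_bounds[where Q=Q and s=s and H=H, OF \<mu> _ Q] assms(2,4,5) by (auto intro: mult_left_mono)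
  moreover have "integrable M \<mu>" using \<mu> by (simp add: prob_dens_def)
  note payoff_mix_at[where Q=Q and s=s and H=H and \<delta>=\<delta>, OF this assms(4,5) Q]
  ultimately show ?thesis by (simp add: algebra_simps)
qed

lemma obedience_mix_at:
  assumes "integrable M \<mu>" "\<pi> \<in> schemes M" "\<rho> \<in> schemes M"
    and "\<And>s a. (\<lambda>\<omega>. u s \<omega> a) \<in> borel_measurable M" "\<And>s \<omega> a. 0 \<le> u s \<omega> a \<and> u s \<omega> a \<le> 1"
  shows "(\<integral>\<omega>. \<mu> \<omega> * mix_at s \<delta> \<pi> \<rho> s \<omega> a * (u s \<omega> a - u s \<omega> a') \<partial>M)
       = (1 - \<delta>) * (\<integral>\<omega>. \<mu> \<omega> * (\<pi> s \<omega> a * (u s \<omega> a - u s \<omega> a')) \<partial>M)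
         + \<delta> * (\<integral>\<omega>. \<mu> \<omega> * (\<rho> s \<omega> a * (u s \<omega> a - u s \<omega> a')) \<partial>M)"
proof -
  have "\<mu> \<omega> * mix_at s \<delta> \<pi> \<rho> s \<omega> a * (u s \<omega> a - u s \<omega> a')
      = (1 - \<delta>) * (\<mu> \<omega> * (\<pi> s \<omega> a * (u s \<omega> a - u s \<omega> a')))
        + \<delta> * (\<mu> \<omega> * (\<rho> s \<omega> a * (u s \<omega> a - u s \<omega> a')))" for \<omega>
    by (simp add: mix_at_def algebra_simps)
  moreover have "integrable M (\<lambda>\<omega>. \<mu> \<omega> * (\<sigma> s \<omega> a * (u s \<omega> a - u s \<omega> a')))"
    if "\<sigma> \<in> schemes M" for \<sigma>
    using obedience_integrand_bounded[OF that assms(4,5)] by (intro integrable_mult_bounded[OF assms(1)])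
  ultimately show ?thesis
    using assms(2,3) by simp
qed

subsection \<open>Robust persuasiveness of the mixture\<close>

lemma robust_mixture_weight:
  fixes \<epsilon> p0 D I1 I2 :: real
  assumes "0 < \<epsilon>" "0 < p0" "0 < D" "D \<le> 1"
    and I1: "-\<epsilon> \<le> I1" and I2: "D * (p0 - 2 * \<epsilon>) \<le> I2" "0 \<le> I2"
  shows "0 \<le> (1 - min 1 (2 * \<epsilon> / (p0 * D))) * I1 + min 1 (2 * \<epsilon> / (p0 * D)) * I2"
proof (cases "1 \<le> 2 * \<epsilon> / (p0 * D)")
  case True
  then show ?thesis using I2 by simp
next
  case False
  define \<delta> where "\<delta> = 2 * \<epsilon> / (p0 * D)"
  have \<delta>: "0 \<le> \<delta>" "\<delta> < 1" "\<delta> * D * p0 = 2 * \<epsilon>"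
    using False assms(1-3) by (auto simp: \<delta>_def)
  have "(1 - \<delta>) * (-\<epsilon>) \<le> (1 - \<delta>) * I1" using I1 \<delta> by (intro mult_left_mono) auto
  moreover have "\<delta> * (D * (p0 - 2 * \<epsilon>)) \<le> \<delta> * I2" using I2 \<delta> by (intro mult_left_mono) auto
  moreover have "\<epsilon> * (\<delta> * D) \<le> \<epsilon> * \<delta>"
    using assms(1,4) \<delta> by (intro mult_left_mono) (auto intro: mult_left_le)
  moreover have "0 \<le> \<epsilon> * (1 - \<delta>)" using assms(1) \<delta> by simp
  ultimately show ?thesis
    using False \<delta>(3) unfolding \<delta>_def[symmetric] by (simp add: algebra_simps)
qed

lemma obedience_mix_best_response_nonneg:
  fixes u :: "'s \<Rightarrow> 'w \<Rightarrow> 'a::finite \<Rightarrow> real"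
  assumes u_range: "\<And>s \<omega> a. 0 \<le> u s \<omega> a \<and> u s \<omega> a \<le> 1"
    and u: "\<And>s a. (\<lambda>\<omega>. u s \<omega> a) \<in> borel_measurable M"
    and p0: "p0 > 0" and D: "D > 0" and \<epsilon>: "\<epsilon> > 0"
    and star: "integrable M \<mu>star" and reg: "regular M u s \<mu>star p0 D"
    and hat: "integrable M \<mu>hat" and close: "l1_dist M \<mu>hat \<mu>star \<le> \<epsilon>"
    and \<pi>: "\<pi> \<in> Pers M \<mu>hat u"
    and \<mu>': "integrable M \<mu>'" "\<And>\<omega>. \<omega> \<in> space M \<Longrightarrow> 0 \<le> \<mu>' \<omega>" "l1_dist M \<mu>hat \<mu>' \<le> \<epsilon>"
  shows "0 \<le> (\<integral>\<omega>. \<mu>' \<omega> * mix_at s (min 1 (2 * \<epsilon> / (p0 * D))) \<pi> (best_response u) s \<omega> a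
                      * (u s \<omega> a - u s \<omega> a') \<partial>M)"
proof (cases "a = a'")
  case False
  have \<pi>_scheme: "\<pi> \<in> schemes M" using \<pi> by (simp add: Pers_def)
  have "(\<integral>\<omega>. \<mu>hat \<omega> * (\<pi> s \<omega> a * (u s \<omega> a - u s \<omega> a')) \<partial>M) - l1_dist M \<mu>hat \<mu>'
          \<le> (\<integral>\<omega>. \<mu>' \<omega> * (\<pi> s \<omega> a * (u s \<omega> a - u s \<omega> a')) \<partial>M)"
    using obedience_integrand_bounded[OF \<pi>_scheme u u_range]
    by (intro integral_mult_ge_sub_l1_dist[OF hat \<mu>'(1)])
  moreover have "0 \<le> (\<integral>\<omega>. \<mu>hat \<omega> * (\<pi> s \<omega> a * (u s \<omega> a - u s \<omega> a')) \<partial>M)"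
    using \<pi> by (simp add: Pers_def mult.assoc)
  moreover have "l1_dist M \<mu>star \<mu>' \<le> 2 * \<epsilon>"
    using l1_dist_triangle[OF star \<mu>'(1) hat] l1_dist_commute[of M \<mu>star \<mu>hat] close \<mu>'(3)
    by linarith
  then have "D * (p0 - 2 * \<epsilon>) \<le> D * (p0 - l1_dist M \<mu>star \<mu>')"
    using D by (intro mult_left_mono) auto
  moreover note best_response_obedience_ge_regular[OF u u_range star reg \<mu>'(1,2) D False]
  moreover have "0 \<le> (\<integral>\<omega>. \<mu>' \<omega> * (best_response u s \<omega> a * (u s \<omega> a - u s \<omega> a')) \<partial>M)"
    using \<mu>'(2) best_response_obedient[of u s _ a a'] by (intro integral_nonneg_AE AE_I2) simp
  moreover have "D \<le> 1" by (rule regular_margin_le_1[OF u_range p0 reg False])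
  ultimately show ?thesis
    using \<mu>'(3) robust_mixture_weight[OF \<epsilon> p0 D]
    by (subst obedience_mix_at[where u=u, OF \<mu>'(1) \<pi>_scheme best_response_schemes[OF u] u u_range])
       auto
qed simp

lemma mix_best_response_PersSet:
  fixes u :: "'s \<Rightarrow> 'w \<Rightarrow> 'a::finite \<Rightarrow> real"
  assumes u_range: "\<And>s \<omega> a. 0 \<le> u s \<omega> a \<and> u s \<omega> a \<le> 1"
    and u: "\<And>s a. (\<lambda>\<omega>. u s \<omega> a) \<in> borel_measurable M"
    and p0: "p0 > 0" and D: "D > 0" and \<epsilon>: "\<epsilon> > 0"
    and star: "integrable M \<mu>star" and reg: "regular M u s \<mu>star p0 D"
    and hat: "integrable M \<mu>hat" and close: "l1_dist M \<mu>hat \<mu>star \<le> \<epsilon>"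
    and \<pi>: "\<pi> \<in> Pers M \<mu>hat u"
  shows "mix_at s (min 1 (2 * \<epsilon> / (p0 * D))) \<pi> (best_response u) \<in> PersSet M (ball_l1 M \<mu>hat \<epsilon>) u"
proof -
  let ?\<sigma> = "mix_at s (min 1 (2 * \<epsilon> / (p0 * D))) \<pi> (best_response u)"
  have \<sigma>_scheme: "?\<sigma> \<in> schemes M"
    using \<pi> \<epsilon> p0 D by (intro mix_at_schemes best_response_schemes[OF u]) (auto simp: Pers_def)
  have "?\<sigma> \<in> Pers M \<mu>' u" if "\<mu>' \<in> ball_l1 M \<mu>hat \<epsilon>" for \<mu>'
    unfolding Pers_def
  proof (intro CollectI conjI allI \<sigma>_scheme)
    have \<mu>': "integrable M \<mu>'" "\<And>\<omega>. \<omega> \<in> space M \<Longrightarrow> 0 \<le> \<mu>' \<omega>" "l1_dist M \<mu>hat \<mu>' \<le> \<epsilon>"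
      using that by (auto simp: ball_l1_def prob_dens_def)
    fix s' and a a' :: 'a
    show "0 \<le> (\<integral>\<omega>. \<mu>' \<omega> * ?\<sigma> s' \<omega> a * (u s' \<omega> a - u s' \<omega> a') \<partial>M)"
    proof (cases "s' = s")
      case True
      then show ?thesis
        using obedience_mix_best_response_nonneg[OF u_range u p0 D \<epsilon> star reg hat close \<pi> \<mu>'] by simp
    next
      case False
      then show ?thesis
        using best_response_Pers[where u=u and \<mu>=\<mu>', OF u \<mu>'(2)] by (simp add: mix_at_def Pers_def)
    qed
  qed
  with \<sigma>_scheme show ?thesis by (simp add: PersSet_def)
qed

lemma Gap_le_of_approximation:
  assumes nonempty: "\<pi>\<^sub>0 \<in> Pers M \<mu> u"
    and bounded: "\<And>\<pi>. \<pi> \<in> PersSet M B u \<Longrightarrow> payoff M Q \<mu> \<pi> s \<le> C"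
    and approx: "\<And>\<pi>. \<pi> \<in> Pers M \<mu> u \<Longrightarrow> \<exists>\<pi>'\<in>PersSet M B u. payoff M Q \<mu> \<pi> s - c \<le> payoff M Q \<mu> \<pi>' s"
  shows "Gap M u Q s \<mu> B \<le> c"
proof -
  have bdd: "bdd_above ((\<lambda>\<pi>. payoff M Q \<mu> \<pi> s) ` PersSet M B u)"
    using bounded unfolding bdd_above_def by auto
  have "(SUP \<pi>\<in>Pers M \<mu> u. payoff M Q \<mu> \<pi> s) \<le> (SUP \<pi>\<in>PersSet M B u. payoff M Q \<mu> \<pi> s) + c"
  proof (rule cSUP_least)
    show "Pers M \<mu> u \<noteq> {}" using nonempty by auto
    fix \<pi> assume "\<pi> \<in> Pers M \<mu> u"
    then obtain \<pi>' where "\<pi>' \<in> PersSet M B u" "payoff M Q \<mu> \<pi> s - c \<le> payoff M Q \<mu> \<pi>' s"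
      using approx by blast
    moreover have "payoff M Q \<mu> \<pi>' s \<le> (SUP \<pi>\<in>PersSet M B u. payoff M Q \<mu> \<pi> s)"
      by (rule cSUP_upper[OF \<open>\<pi>' \<in> PersSet M B u\<close> bdd])
    ultimately show "payoff M Q \<mu> \<pi> s \<le> (SUP \<pi>\<in>PersSet M B u. payoff M Q \<mu> \<pi> s) + c"
      by linarith
  qed
  then show ?thesis by (simp add: Gap_def)
qed

theorem mainTheorem8:
  fixes M :: "'w measure"
    and u Q :: "'s \<Rightarrow> 'w \<Rightarrow> 'a::finite \<Rightarrow> real"
    and s :: 's and H p0 D \<epsilon> :: real
    and \<mu>star \<mu>hat :: "'w \<Rightarrow> real"
  assumes u_range: "\<forall>s \<omega> a. 0 \<le> u s \<omega> a \<and> u s \<omega> a \<le> 1"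
    and Q_range: "\<forall>s \<omega> a. 0 \<le> Q s \<omega> a \<and> Q s \<omega> a \<le> H"
    and u_meas: "\<forall>s a. (\<lambda>\<omega>. u s \<omega> a) \<in> borel_measurable M"
    and Q_meas: "\<forall>s a. (\<lambda>\<omega>. Q s \<omega> a) \<in> borel_measurable M"
    and p0_pos: "p0 > 0" and D_pos: "D > 0"
    and star: "\<mu>star \<in> prob_dens M"
    and reg: "regular M u s \<mu>star p0 D"
    and eps: "\<epsilon> > 0"
    and hat: "\<mu>hat \<in> prob_dens M"
    and close: "l1_dist M \<mu>hat \<mu>star \<le> \<epsilon>"
  shows "Gap M u Q s \<mu>hat (ball_l1 M \<mu>hat \<epsilon>) \<le> 2 * H * \<epsilon> / (p0 * D)"
proof -
  define \<delta> where "\<delta> = min 1 (2 * \<epsilon> / (p0 * D))"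
  have u: "\<And>s a. (\<lambda>\<omega>. u s \<omega> a) \<in> borel_measurable M" "\<And>s \<omega> a. 0 \<le> u s \<omega> a \<and> u s \<omega> a \<le> 1"
    and Q: "\<And>a. (\<lambda>\<omega>. Q s \<omega> a) \<in> borel_measurable M" "\<And>\<omega> a. 0 \<le> Q s \<omega> a \<and> Q s \<omega> a \<le> H"
    using u_meas u_range Q_meas Q_range by auto
  have integrable: "integrable M \<mu>star" "integrable M \<mu>hat"
    using star hat by (auto simp: prob_dens_def)
  have "Gap M u Q s \<mu>hat (ball_l1 M \<mu>hat \<epsilon>) \<le> \<delta> * H"
  proof (rule Gap_le_of_approximation)
    show "best_response u \<in> Pers M \<mu>hat u"
      using hat by (intro best_response_Pers u) (auto simp: prob_dens_def)
    show "payoff M Q \<mu>hat \<pi> s \<le> H" if "\<pi> \<in> PersSet M (ball_l1 M \<mu>hat \<epsilon>) u" for \<pi>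
      using payoff_bounds[where Q=Q and s=s and H=H, OF hat _ Q] that by (auto simp: PersSet_def)
    fix \<pi> assume \<pi>: "\<pi> \<in> Pers M \<mu>hat u"
    show "\<exists>\<pi>'\<in>PersSet M (ball_l1 M \<mu>hat \<epsilon>) u. payoff M Q \<mu>hat \<pi> s - \<delta> * H \<le> payoff M Q \<mu>hat \<pi>' s"
    proof (intro bexI)
      show "mix_at s \<delta> \<pi> (best_response u) \<in> PersSet M (ball_l1 M \<mu>hat \<epsilon>) u"
        unfolding \<delta>_def using mix_best_response_PersSet[OF u(2,1) p0_pos D_pos eps integrable(1) reg
            integrable(2) close \<pi>] .
      show "payoff M Q \<mu>hat \<pi> s - \<delta> * H \<le> payoff M Q \<mu>hat (mix_at s \<delta> \<pi> (best_response u)) s"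
        using \<pi> eps p0_pos D_pos
        by (intro payoff_mix_at_ge[where Q=Q and s=s and H=H, OF hat _ _ _ best_response_schemes[OF u(1)] Q])
           (auto simp: \<delta>_def Pers_def)
    qed
  qed
  also have "\<delta> * H \<le> 2 * \<epsilon> / (p0 * D) * H"
    using Q(2) by (intro mult_right_mono) (auto simp: \<delta>_def intro: order_trans)
  also have "\<dots> = 2 * H * \<epsilon> / (p0 * D)" by simp
  finally show ?thesis .
qed

end
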